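(* Let $G=(V,E)$ be a directed graph with $n$ vertices, $m$ edges and oriented incidence matrix $D\in\mathbb{R}^{m\times n}$, and let $\bm{y}\in\mathbb{R}^{n}$ be a signal over its nodes. Let $\Delta$ be either $L=D^{T}D$ (general trend filtering) or the Kronecker matrix $K$ (Kronecker trend filtering, when $G$ is the grid graph of a lattice $\{1,\dots,N\}^k$). For penalisation parameters $\lambda_{NI},\lambda_{F},\lambda_{T}>0$ let $$\hat{\bm{\beta}}^{NITF}=\arg\min_{\bm{\beta}\in\mathbb{R}^{n}}\tfrac12\|\bm{y}-\bm{\beta}\|_2^2+\lambda_{NI}\|D\bm{\beta}\|_{+}+\lambda_{T}\|\Delta\bm{\beta}\|_1,$$ $$\hat{\bm{\beta}}^{FLTF}=\arg\min_{\bm{\beta}\in\mathbb{R}^{n}}\tfrac12\|\bm{y}-\bm{\beta}\|_2^2+\lambda_{F}\|D\bm{\beta}\|_1+\lambda_{T}\|\Delta\bm{\beta}\|_1.$$ Then for any such parameters $$\sum_{i=1}^{n}y_i=\sum_{i=1}^{n}\hat{\beta}^{NITF}_i=\sum_{i=1}^{n}\hat{\beta}^{FLTF}_i.$$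
   Context: The oriented incidence matrix $D\in\mathbb{R}^{m\times n}$ has $D_{i,j}=1$ if vertex $j$ is the source of edge $i$, $D_{i,j}=-1$ if vertex $j$ is the target of edge $i$, and $0$ otherwise. For $\bm{x}\in\mathbb{R}^m$, $\|\bm{x}\|_{+}=\sum_i\max(x_i,0)$. For the lattice $\{1,\dots,N\}^{k}$ (with edges between lattice neighbours differing by $1$ in one coordinate, oriented in the increasing direction), $D^{t}\in\mathbb{R}^{(N-2)\times N}$ is the second-difference matrix whose $i$-th row has entries $1,-2,1$ in columns $i,i+1,i+2$ and zeros elsewhere, and $K$ is the vertical stack of the $k$ blocks $I_N\otimes\cdots\otimes D^{t}\otimes\cdots\otimes I_N$ ($D^{t}$ in the $j$-th position, $j=1,\dots,k$), $\otimes$ the Kronecker product. *)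

theory Defs
  imports Complex_Main
begin

text \<open>A directed graph is given by a finite vertex set V and an edge set
E of ordered pairs (source, target), without self-loops. Signals on the
nodes are functions 'v => real (only values on V matter).\<close>

definition digraph :: "'v set \<Rightarrow> ('v \<times> 'v) set \<Rightarrow> bool" where
  "digraph V E \<longleftrightarrow> finite V \<and> E \<subseteq> V \<times> V \<and> (\<forall>(u,w)\<in>E. u \<noteq> w)"

definition inc :: "('v \<times> 'v) \<Rightarrow> 'v \<Rightarrow> real" where
  "inc e v = (if v = fst e then 1 else if v = snd e then -1 else 0)"

definition Dmul :: "'v set \<Rightarrow> ('v \<times> 'v) \<Rightarrow> ('v \<Rightarrow> real) \<Rightarrow> real" where
  "Dmul V e \<beta> = (\<Sum>v\<in>V. inc e v * \<beta> v)"

definition Lmul :: "'v set \<Rightarrow> ('v \<times> 'v) set \<Rightarrow> ('v \<Rightarrow> real) \<Rightarrow> 'v \<Rightarrow> real" where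
  "Lmul V E \<beta> v = (\<Sum>e\<in>E. inc e v * Dmul V e \<beta>)"

definition norm_plus_D :: "'v set \<Rightarrow> ('v \<times> 'v) set \<Rightarrow> ('v \<Rightarrow> real) \<Rightarrow> real" where
  "norm_plus_D V E \<beta> = (\<Sum>e\<in>E. max (Dmul V e \<beta>) 0)"

definition norm1_D :: "'v set \<Rightarrow> ('v \<times> 'v) set \<Rightarrow> ('v \<Rightarrow> real) \<Rightarrow> real" where
  "norm1_D V E \<beta> = (\<Sum>e\<in>E. \<bar>Dmul V e \<beta>\<bar>)"

definition norm1_L :: "'v set \<Rightarrow> ('v \<times> 'v) set \<Rightarrow> ('v \<Rightarrow> real) \<Rightarrow> real" where
  "norm1_L V E \<beta> = (\<Sum>v\<in>V. \<bar>Lmul V E \<beta> v\<bar>)"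

definition lattice :: "nat \<Rightarrow> nat \<Rightarrow> nat list set" where
  "lattice N k = {x. length x = k \<and> set x \<subseteq> {1..N}}"

definition lattice_edge :: "nat \<Rightarrow> nat \<Rightarrow> nat list \<Rightarrow> nat list \<Rightarrow> bool" where
  "lattice_edge N k x z \<longleftrightarrow> x \<in> lattice N k \<and> z \<in> lattice N k \<and>
     (\<exists>j<k. z = x[j := x ! j + 1])"

text \<open>||K b||_1 for the Kronecker matrix K (stack over j of
I \<otimes> ... \<otimes> D^t \<otimes> ... \<otimes> I). The rows of the j-th block are indexed by
lattice points x with x_j in {1..N-2}, the row being
b(x) - 2 b(x + e_j) + b(x + 2 e_j).\<close>
definition norm1_K :: "nat \<Rightarrow> nat \<Rightarrow> (nat list \<Rightarrow> real) \<Rightarrow> real" where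
  "norm1_K N k b = (\<Sum>j<k. \<Sum>x\<in>{x\<in>lattice N k. x ! j + 2 \<le> N}.
      \<bar>b x - 2 * b (x[j := x ! j + 1]) + b (x[j := x ! j + 2])\<bar>)"

definition sqloss :: "'v set \<Rightarrow> ('v \<Rightarrow> real) \<Rightarrow> ('v \<Rightarrow> real) \<Rightarrow> real" where
  "sqloss V y \<beta> = (1/2) * (\<Sum>v\<in>V. (y v - \<beta> v)^2)"

definition is_minimiser :: "'v set \<Rightarrow> (('v \<Rightarrow> real) \<Rightarrow> real) \<Rightarrow> ('v \<Rightarrow> real) \<Rightarrow> bool" where
  "is_minimiser V f b \<longleftrightarrow> (\<forall>\<beta>. f b \<le> f \<beta>)"

end

theory Submission
  imports Defs
begin

text \<open>Every row of D, of L = D^T D and of K sums to zero, so all penalties are invariant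
under adding a constant c to the signal. Shifting a minimiser \<beta> by c changes the objective
by -c S + c^2 n / 2 with S = \<Sum>(y - \<beta>); minimality tested at c = S / n forces S = 0.\<close>

definition shift_invariant :: "(('v \<Rightarrow> real) \<Rightarrow> real) \<Rightarrow> bool" where
  "shift_invariant P \<longleftrightarrow> (\<forall>\<beta> c. P (\<lambda>v. \<beta> v + c) = P \<beta>)"

lemma shift_invariantI: "(\<And>\<beta> c. P (\<lambda>v. \<beta> v + c) = P \<beta>) \<Longrightarrow> shift_invariant P"
  by (simp add: shift_invariant_def)

lemma shift_invariantD: "shift_invariant P \<Longrightarrow> P (\<lambda>v. \<beta> v + c) = P \<beta>"
  by (simp add: shift_invariant_def)

lemma shift_invariant_add:
  "shift_invariant P \<Longrightarrow> shift_invariant Q \<Longrightarrow> shift_invariant (\<lambda>\<beta>. P \<beta> + Q \<beta>)"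
  by (simp add: shift_invariant_def)

lemma shift_invariant_scale: "shift_invariant P \<Longrightarrow> shift_invariant (\<lambda>\<beta>. a * P \<beta>)"
  by (simp add: shift_invariant_def)

lemma shift_invariant_comp:
  "shift_invariant P \<Longrightarrow> shift_invariant (\<lambda>\<beta>. P (\<beta> \<circ> g))"
  by (simp add: shift_invariant_def o_def)

lemma sum_inc_eq_0:
  assumes "digraph V E" and "e \<in> E"
  shows "(\<Sum>v\<in>V. inc e v) = 0"
proof -
  obtain u w where e: "e = (u, w)" by force
  have uw: "u \<in> V" "w \<in> V" "u \<noteq> w" and "finite V"
    using assms e unfolding digraph_def by auto
  have "(\<Sum>v\<in>V. inc e v) = (\<Sum>v\<in>V. (if v = u then 1 else 0) - (if v = w then 1 else 0))"
    by (rule sum.cong) (auto simp: inc_def e uw)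
  also have "\<dots> = 0"
    using \<open>finite V\<close> uw by (simp add: sum_subtractf)
  finally show ?thesis .
qed

lemma Dmul_add_const:
  assumes "digraph V E" and "e \<in> E"
  shows "Dmul V e (\<lambda>v. \<beta> v + c) = Dmul V e \<beta>"
proof -
  have "Dmul V e (\<lambda>v. \<beta> v + c) = Dmul V e \<beta> + c * (\<Sum>v\<in>V. inc e v)"
    unfolding Dmul_def by (simp add: algebra_simps sum.distrib sum_distrib_left)
  with sum_inc_eq_0[OF assms] show ?thesis by simp
qed

lemma shift_invariant_norm_plus_D: "digraph V E \<Longrightarrow> shift_invariant (norm_plus_D V E)"
  unfolding norm_plus_D_def by (intro shift_invariantI sum.cong) (simp_all add: Dmul_add_const)

lemma shift_invariant_norm1_D: "digraph V E \<Longrightarrow> shift_invariant (norm1_D V E)"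
  unfolding norm1_D_def by (intro shift_invariantI sum.cong) (simp_all add: Dmul_add_const)

lemma shift_invariant_norm1_L: "digraph V E \<Longrightarrow> shift_invariant (norm1_L V E)"
  unfolding norm1_L_def Lmul_def
  by (intro shift_invariantI sum.cong refl arg_cong[where f = abs]) (simp add: Dmul_add_const)

lemma shift_invariant_norm1_K: "shift_invariant (norm1_K N k)"
  unfolding norm1_K_def by (rule shift_invariantI) (simp add: algebra_simps)

lemma sqloss_add_const:
  "sqloss V y (\<lambda>v. \<beta> v + c) =
     sqloss V y \<beta> - c * (\<Sum>v\<in>V. y v - \<beta> v) + c\<^sup>2 * real (card V) / 2"
proof -
  have "(\<Sum>v\<in>V. (y v - (\<beta> v + c))\<^sup>2) = (\<Sum>v\<in>V. (y v - \<beta> v)\<^sup>2 - 2 * c * (y v - \<beta> v) + c\<^sup>2)"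
    by (rule sum.cong) (auto simp: power2_eq_square algebra_simps)
  also have "\<dots> = (\<Sum>v\<in>V. (y v - \<beta> v)\<^sup>2) - 2 * c * (\<Sum>v\<in>V. y v - \<beta> v) + c\<^sup>2 * real (card V)"
    by (simp add: sum.distrib sum_subtractf sum_distrib_left[symmetric])
  finally show ?thesis
    unfolding sqloss_def by (simp add: algebra_simps)
qed

lemma sum_minimiser_eq:
  assumes "finite V" and "shift_invariant P"
    and "is_minimiser V (\<lambda>\<beta>. sqloss V y \<beta> + P \<beta>) b"
  shows "(\<Sum>v\<in>V. y v) = (\<Sum>v\<in>V. b v)"
proof (cases "V = {}")
  case False
  define S where "S = (\<Sum>v\<in>V. y v - b v)"
  define n where "n = real (card V)"
  have "n > 0"
    using False \<open>finite V\<close> by (simp add: n_def card_gt_0_iff)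
  have "sqloss V y b + P b \<le> sqloss V y (\<lambda>v. b v + S / n) + P (\<lambda>v. b v + S / n)"
    using assms(3) unfolding is_minimiser_def by blast
  then have "0 \<le> - (S / n) * S + (S / n)\<^sup>2 * n / 2"
    using sqloss_add_const[of V y b "S / n"] shift_invariantD[OF assms(2)]
    by (simp add: S_def n_def)
  also have "\<dots> = - S\<^sup>2 / (2 * n)"
    using \<open>n > 0\<close> by (simp add: field_simps power2_eq_square)
  finally have "S\<^sup>2 \<le> 0"
    using \<open>n > 0\<close> by (simp add: divide_le_0_iff)
  then have "S = 0" by simp
  then show ?thesis by (simp add: S_def sum_subtractf)
qed simp

theorem theorem2p4:
  fixes V :: "'v set" and E :: "('v \<times> 'v) set" and y :: "'v \<Rightarrow> real"
    and T :: "('v \<Rightarrow> real) \<Rightarrow> real"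
    and lamNI lamF lamT :: real and bNI bFL :: "'v \<Rightarrow> real"
  assumes G: "digraph V E"
    and Delta: "T = norm1_L V E \<or>
      (\<exists>N k \<phi>. bij_betw \<phi> V (lattice N k) \<and>
         E = {(u, w). u \<in> V \<and> w \<in> V \<and> lattice_edge N k (\<phi> u) (\<phi> w)} \<and>
         T = (\<lambda>\<beta>. norm1_K N k (\<beta> \<circ> inv_into V \<phi>)))"
    and pos: "lamNI > 0" "lamF > 0" "lamT > 0"
    and NI: "is_minimiser V (\<lambda>\<beta>. sqloss V y \<beta> + lamNI * norm_plus_D V E \<beta> + lamT * T \<beta>) bNI"
    and FL: "is_minimiser V (\<lambda>\<beta>. sqloss V y \<beta> + lamF * norm1_D V E \<beta> + lamT * T \<beta>) bFL"
  shows "(\<Sum>v\<in>V. y v) = (\<Sum>v\<in>V. bNI v) \<and> (\<Sum>v\<in>V. bNI v) = (\<Sum>v\<in>V. bFL v)"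
proof -
  have "finite V"
    using G by (simp add: digraph_def)
  have T: "shift_invariant T"
    using Delta shift_invariant_norm1_L[OF G] shift_invariant_comp[OF shift_invariant_norm1_K]
    by auto
  have "(\<Sum>v\<in>V. y v) = (\<Sum>v\<in>V. bNI v)"
    using \<open>finite V\<close> _ NI[unfolded add.assoc]
    by (rule sum_minimiser_eq)
      (intro shift_invariant_add shift_invariant_scale shift_invariant_norm_plus_D G T)
  moreover have "(\<Sum>v\<in>V. y v) = (\<Sum>v\<in>V. bFL v)"
    using \<open>finite V\<close> _ FL[unfolded add.assoc]
    by (rule sum_minimiser_eq)
      (intro shift_invariant_add shift_invariant_scale shift_invariant_norm1_D G T)
  ultimately show ?thesis by simp
qed

end
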